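(* Let $\sigma_1,\sigma_2>0$, $\rho\in\mathbb{R}$, and let $\psi_{11},\psi_{12},\psi_{22}:[0,\infty)\to\mathbb{R}$ be continuous functions, each a correlation function of a stationary isotropic univariate random field (in particular $\psi_{ij}(0)=1$); write $\psi_{21}=\psi_{12}$. Define $$C(r)=\begin{bmatrix}\sigma_1^2\psi_{11}(r)&\rho\sigma_1\sigma_2\psi_{12}(r)\\ \rho\sigma_1\sigma_2\psi_{12}(r)&\sigma_2^2\psi_{22}(r)\end{bmatrix},\qquad r\ge0.$$ (a) Suppose $\psi_{ij}$, $i,j=1,2$, are twice continuously differentiable on $(0,\infty)$ and: (i) $\psi_{ii}''(r)\ge0$ for all $r>0$, $i=1,2$; (ii) $\psi_{ij}(r)\to0$ and $r\psi_{ij}'(r)\to0$ as $r\to\infty$, $i,j=1,2$; (iii) $r\mapsto r\psi_{ij}''(r)$ is integrable on $(0,\infty)$, $i,j=1,2$; (iv) $\rho^2\le\inf_{r>0}\frac{\psi_{11}''(r)\psi_{22}''(r)}{(\psi_{12}''(r))^2}$. Then $C$ is positive definite in $\mathbb{R}$. (b) Suppose $\psi_{ij}$, $i,j=1,2$, are three times continuously differentiable on $(0,\infty)$ and: (i) $\psi_{ii}''(r)-r\psi_{ii}'''(r)\ge0$ for all $r>0$, $i=1,2$; (ii) $\psi_{ij}(r)\to0$, $r\psi_{ij}'(r)\to0$ and $r^2\psi_{ij}''(r)\to0$ as $r\to\infty$, $i,j=1,2$; (iii) $r\mapsto r\psi_{ij}''(r)-r^2\psi_{ij}'''(r)$ is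 integrable on $(0,\infty)$, $i,j=1,2$; (iv) $\rho^2\le\inf_{r>0}\frac{(\psi_{11}''(r)-r\psi_{11}'''(r))(\psi_{22}''(r)-r\psi_{22}'''(r))}{(\psi_{12}''(r)-r\psi_{12}'''(r))^2}$. Then $C$ is positive definite in $\mathbb{R}^3$.
   Context: A $2\times2$ matrix-valued function $C$ on $[0,\infty)$ is called positive definite in $\mathbb{R}^n$ if for every $p\in\mathbb{N}$, all $x_1,\dots,x_p\in\mathbb{R}^n$ and all $a_1,\dots,a_p\in\mathbb{R}^2$ one has $\sum_{i,j=1}^p a_i^T C(\|x_i-x_j\|)a_j\ge0$. In (a)(iv) the infimum is over those $r>0$ with $\psi_{12}''(r)\neq0$, and in (b)(iv) over those $r>0$ with $\psi_{12}''(r)-r\psi_{12}'''(r)\neq0$. *)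

theory Defs
  imports "HOL-Analysis.Analysis"
begin

definition scalar_pd_in :: "'a::real_normed_vector itself \<Rightarrow> (real \<Rightarrow> real) \<Rightarrow> bool" where
  "scalar_pd_in (_::'a itself) \<psi> \<longleftrightarrow>
     (\<forall>(p::nat) (x::nat \<Rightarrow> 'a) (c::nat \<Rightarrow> real).
        (\<Sum>i<p. \<Sum>j<p. c i * \<psi> (norm (x i - x j)) * c j) \<ge> 0)"

definition correlation_fun_in :: "'a::real_normed_vector itself \<Rightarrow> (real \<Rightarrow> real) \<Rightarrow> bool" where
  "correlation_fun_in T \<psi> \<longleftrightarrow> \<psi> 0 = 1 \<and> scalar_pd_in T \<psi>"

definition matrix_pd_in :: "'a::real_normed_vector itself \<Rightarrow> (real \<Rightarrow> real^2^2) \<Rightarrow> bool" where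
  "matrix_pd_in (_::'a itself) C \<longleftrightarrow>
     (\<forall>(p::nat) (x::nat \<Rightarrow> 'a) (a::nat \<Rightarrow> real^2).
        (\<Sum>i<p. \<Sum>j<p. a i \<bullet> (C (norm (x i - x j)) *v a j)) \<ge> 0)"

definition Ck_on :: "nat \<Rightarrow> (real \<Rightarrow> real) \<Rightarrow> real set \<Rightarrow> bool" where
  "Ck_on k f S \<longleftrightarrow>
     (\<forall>m<k. \<forall>x\<in>S. ((deriv ^^ m) f) differentiable (at x)) \<and>
     continuous_on S ((deriv ^^ k) f)"

definition cov_matrix :: "real \<Rightarrow> real \<Rightarrow> real \<Rightarrow> (real \<Rightarrow> real) \<Rightarrow> (real \<Rightarrow> real) \<Rightarrow> (real \<Rightarrow> real)
    \<Rightarrow> real \<Rightarrow> real^2^2" where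
  "cov_matrix \<sigma>1 \<sigma>2 \<rho> \<psi>11 \<psi>12 \<psi>22 r =
     vector [vector [\<sigma>1^2 * \<psi>11 r, \<rho> * \<sigma>1 * \<sigma>2 * \<psi>12 r],
             vector [\<rho> * \<sigma>1 * \<sigma>2 * \<psi>12 r, \<sigma>2^2 * \<psi>22 r]]"

end

theory Submission
  imports Defs
begin

text \<open>Integrating by parts twice writes each \<open>\<psi>\<close> as a scale mixture
  \<open>\<psi> r = \<integral>\<^sub>0\<^sup>\<infinity> \<kappa> (r / t) h t dt\<close> of one compactly supported kernel: the triangular kernel
  \<open>\<kappa> s = (1 - s)\<^sub>+\<close> with \<open>h t = t \<psi>'' t\<close> on \<open>\<real>\<close>, and the spherical kernel
  \<open>\<kappa> s = (1 - s)\<^sub>+\<^sup>2 (1 + s/2)\<close> with \<open>h t = (t \<psi>'' t - t\<^sup>2 \<psi>''' t) / 3\<close> on \<open>\<real>\<^sup>3\<close>; the decay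
  conditions kill the boundary terms. Every \<open>\<kappa> (\<cdot> / t)\<close> is positive definite, being the
  normalised overlap length of two intervals, resp. overlap volume of two balls, of diameter
  \<open>t\<close>. Hence the quadratic form of \<open>C\<close> is an integral over \<open>t\<close> of forms
  \<open>\<Sum>\<^sub>i\<^sub>j K\<^sub>i\<^sub>j (\<alpha> u\<^sub>i u\<^sub>j + \<beta> (u\<^sub>i v\<^sub>j + v\<^sub>i u\<^sub>j) + \<gamma> v\<^sub>i v\<^sub>j)\<close> with \<open>K\<close> positive semidefinite, and
  conditions (i) and (iv) say that the coefficient matrix \<open>[[\<alpha>, \<beta>], [\<beta>, \<gamma>]]\<close> is positive
  semidefinite for every \<open>t\<close>.\<close>

section \<open>Positive definite kernels from overlap measures\<close>

lemma gram_measure_Int_nonneg: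
  fixes M :: "'b measure" and A :: "nat \<Rightarrow> 'b set" and c :: "nat \<Rightarrow> real"
  assumes "\<And>i. A i \<in> sets M" and "\<And>i. emeasure M (A i) < \<infinity>"
  shows "(\<Sum>i<p. \<Sum>j<p. c i * measure M (A i \<inter> A j) * c j) \<ge> 0"
proof -
  have ind_Int: "indicator (A i) z * indicator (A j) z = (indicator (A i \<inter> A j) z :: real)" for i j z
    by (simp add: indicator_def)
  have int: "integrable M (\<lambda>z. (c i * c j) * (indicator (A i) z * indicator (A j) z) :: real)" for i j
  proof -
    have "integrable M (indicator (A i \<inter> A j) :: 'b \<Rightarrow> real)"
      using assms by (intro integrable_real_indicator)
        (auto intro: le_less_trans[OF emeasure_mono[of "A i \<inter> A j" "A i"]])
    then show ?thesis by (simp add: ind_Int)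
  qed
  have measure_eq: "measure M (A i \<inter> A j) = (LINT z|M. indicator (A i) z * indicator (A j) z)" for i j
  proof -
    have "A i \<inter> A j \<inter> space M = A i \<inter> A j"
      using sets.sets_into_space[OF assms(1)[of i]] by auto
    then show ?thesis by (simp add: ind_Int)
  qed
  have "(\<Sum>i<p. \<Sum>j<p. c i * measure M (A i \<inter> A j) * c j)
      = (\<Sum>i<p. \<Sum>j<p. LINT z|M. (c i * c j) * (indicator (A i) z * indicator (A j) z))"
    by (simp add: measure_eq mult_ac)
  also have "\<dots> = (LINT z|M. (\<Sum>i<p. \<Sum>j<p. (c i * c j) * (indicator (A i) z * indicator (A j) z)))"
    using int by (simp add: integrable_sum)
  also have "\<dots> = (LINT z|M. (\<Sum>i<p. c i * indicator (A i) z)^2)"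
    by (intro Bochner_Integration.integral_cong refl) (simp only: power2_eq_square sum_product mult_ac)
  also have "\<dots> \<ge> 0" by simp
  finally show ?thesis .
qed

definition triangular_kernel :: "real \<Rightarrow> real" where
  "triangular_kernel s = max 0 (1 - s)"

lemma continuous_on_triangular_kernel: "continuous_on UNIV triangular_kernel"
  unfolding triangular_kernel_def by (intro continuous_intros)

lemma abs_triangular_kernel_le_one: "s \<ge> 0 \<Longrightarrow> \<bar>triangular_kernel s\<bar> \<le> 1"
  by (simp add: triangular_kernel_def)

lemma scalar_pd_in_triangular_kernel:
  assumes "t > 0"
  shows "scalar_pd_in TYPE(real) (\<lambda>r. triangular_kernel (r / t))"
  unfolding scalar_pd_in_def
proof (intro allI)
  fix p :: nat and x c :: "nat \<Rightarrow> real"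
  have overlap: "triangular_kernel (norm (x i - x j) / t)
      = measure lborel ({x i - t..x i} \<inter> {x j - t..x j}) / t" for i j
  proof -
    have "{x i - t..x i} \<inter> {x j - t..x j} = {max (x i) (x j) - t .. min (x i) (x j)}" by auto
    then have "measure lborel ({x i - t..x i} \<inter> {x j - t..x j}) = max 0 (t - \<bar>x i - x j\<bar>)"
      by (simp add: measure_def emeasure_lborel_Icc_eq) (auto simp: max_def min_def)
    then show ?thesis
      using assms by (simp add: triangular_kernel_def field_simps max_def)
  qed
  have "0 \<le> (\<Sum>i<p. \<Sum>j<p. c i * measure lborel ({x i - t..x i} \<inter> {x j - t..x j}) * c j) / t"
    using assms gram_measure_Int_nonneg[of "\<lambda>i. {x i - t..x i}" lborel] by simp
  also have "\<dots> = (\<Sum>i<p. \<Sum>j<p. c i * triangular_kernel (norm (x i - x j) / t) * c j)"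
    by (simp only: sum_divide_distrib overlap times_divide_eq_right times_divide_eq_left)
  finally show "(\<Sum>i<p. \<Sum>j<p. c i * triangular_kernel (norm (x i - x j) / t) * c j) \<ge> 0" .
qed

definition spherical_kernel :: "real \<Rightarrow> real" where
  "spherical_kernel s = (max 0 (1 - s))^2 * (1 + s / 2)"

lemma continuous_on_spherical_kernel: "continuous_on UNIV spherical_kernel"
  unfolding spherical_kernel_def by (intro continuous_intros) auto

lemma abs_spherical_kernel_le_one:
  assumes "s \<ge> 0"
  shows "\<bar>spherical_kernel s\<bar> \<le> 1"
proof (cases "s \<le> 1")
  case True
  have "(1 - s)^2 * (1 + s/2) = 1 - s * (3 - s^2) / 2"
    by (simp add: power2_eq_square field_simps)
  moreover have "s^2 \<le> 1" using True assms by (simp add: power_le_one)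
  moreover have "(1 - s)^2 * (1 + s/2) \<ge> 0" using assms by simp
  moreover have "spherical_kernel s = (1 - s)^2 * (1 + s/2)" using True by (simp add: spherical_kernel_def)
  ultimately show ?thesis using assms by (simp add: abs_le_iff)
qed (simp add: spherical_kernel_def)

lemma spherical_kernel_lens_volume:
  assumes "R > 0" "0 \<le> d" "d \<le> 2 * R"
  shows "4 * pi / 3 * R^3 * spherical_kernel (d / (2 * R)) = pi * (4 * R^3 / 3 - R^2 * d + d^3 / 12)"
proof -
  have "1 - d / (2 * R) \<ge> 0" using assms by (simp add: field_simps)
  then have "spherical_kernel (d / (2 * R)) = (1 - d / (2 * R))^2 * (1 + d / (2 * R) / 2)"
    by (simp add: spherical_kernel_def)
  also have "\<dots> = (2 * R - d)^2 * (4 * R + d) / (16 * R^3)"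
    using assms by (simp add: power2_eq_square power3_eq_cube field_simps)
  finally have k: "spherical_kernel (d / (2 * R)) = (2 * R - d)^2 * (4 * R + d) / (16 * R^3)" .
  show ?thesis
    unfolding k using assms by (simp add: power2_eq_square power3_eq_cube field_simps)
qed

lemma has_integral_sq_sub_sq:
  fixes R a b d :: real
  assumes "a \<le> b"
  shows "((\<lambda>y. R^2 - (y - d)^2) has_integral
           (R^2 * b - (b - d)^3 / 3) - (R^2 * a - (a - d)^3 / 3)) {a..b}"
proof -
  have "((\<lambda>y. R^2 - (y - d)^2) has_integral
          (\<lambda>y. R^2 * y - (y - d)^3 / 3) b - (\<lambda>y. R^2 * y - (y - d)^3 / 3) a) {a..b}"
    by (rule fundamental_theorem_of_calculus[OF assms])
       (auto intro!: derivative_eq_intros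
         simp: power2_eq_square has_real_derivative_iff_has_vector_derivative[symmetric])
  then show ?thesis by simp
qed

text \<open>\<open>max 0 (min (R\<^sup>2 - y\<^sup>2) (R\<^sup>2 - (y - d)\<^sup>2))\<close> is the squared radius of the cross-section
  at height \<open>y\<close> of the lens \<open>cball 0 R \<inter> cball (d, 0, 0) R\<close>; the plane \<open>y = d / 2\<close> separates
  its two caps.\<close>

lemma lens_section_split:
  fixes R d y :: real
  assumes R: "R > 0" and d: "0 \<le> d" "d \<le> 2 * R" and y: "y \<noteq> d / 2"
  shows "ennreal (max 0 (min (R^2 - y^2) (R^2 - (y - d)^2)))
       = ennreal (R^2 - y^2) * indicator {d/2..R} y + ennreal (R^2 - (y - d)^2) * indicator {d-R..d/2} y"
proof (cases "y > d/2")
  case True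
  have "y^2 - (y - d)^2 = d * (2 * y - d)" by (simp add: power2_eq_square algebra_simps)
  moreover have "d * (2 * y - d) \<ge> 0" using True d by simp
  ultimately have "(y - d)^2 \<le> y^2" by linarith
  then have m: "min (R^2 - y^2) (R^2 - (y - d)^2) = R^2 - y^2" by simp
  show ?thesis
  proof (cases "y \<le> R")
    case True
    with \<open>y > d/2\<close> d show ?thesis by (simp add: m indicator_def)
  next
    case False
    then have "R^2 - y^2 < 0" using R by (simp add: power_strict_mono)
    with False \<open>y > d/2\<close> show ?thesis by (simp add: m indicator_def)
  qed
next
  case False
  then have "y < d/2" using y by auto
  have "(y - d)^2 - y^2 = d * (d - 2 * y)" by (simp add: power2_eq_square algebra_simps)
  moreover have "d * (d - 2 * y) \<ge> 0" using \<open>y < d/2\<close> d by simp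
  ultimately have "y^2 \<le> (y - d)^2" by linarith
  then have m: "min (R^2 - y^2) (R^2 - (y - d)^2) = R^2 - (y - d)^2" by simp
  show ?thesis
  proof (cases "d - R \<le> y")
    case True
    have "(d - y)^2 \<le> R^2" using True \<open>y < d/2\<close> d by (intro power_mono) auto
    then have "(y - d)^2 \<le> R^2" by (simp add: power2_commute)
    with True \<open>y < d/2\<close> show ?thesis by (simp add: m indicator_def)
  next
    case False
    then have "R^2 < (d - y)^2" using R by (simp add: power_strict_mono)
    then have "R^2 - (y - d)^2 < 0" by (simp add: power2_commute)
    with False \<open>y < d/2\<close> show ?thesis by (simp add: m indicator_def)
  qed
qed

lemma nn_integral_lens_section:
  fixes R d :: real
  assumes R: "R > 0" and d: "0 \<le> d" "d \<le> 2 * R"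
  shows "(\<integral>\<^sup>+ y. ennreal (max 0 (min (R^2 - y^2) (R^2 - (y - d)^2))) \<partial>lborel)
          = ennreal (4 * R^3 / 3 - R^2 * d + d^3 / 12)"
proof -
  have a1: "d/2 \<le> R" and a2: "d - R \<le> d/2" using d R by auto
  define I where "I = (R^2 * R - R^3/3) - (R^2 * (d/2) - (d/2)^3/3)"
  have I_nonneg: "I \<ge> 0"
  proof -
    have "I = (R - d/2)^2 * (2*R + d/2) / 3"
      by (simp add: I_def power2_eq_square power3_eq_cube field_simps)
    moreover have "(R - d/2)^2 * (2*R + d/2) / 3 \<ge> 0" using d R by simp
    ultimately show ?thesis by linarith
  qed
  have "AE y in lborel. y \<notin> {d/2}" by (intro AE_not_in countable_imp_null_set_lborel) auto
  then have "(\<integral>\<^sup>+ y. ennreal (max 0 (min (R^2 - y^2) (R^2 - (y - d)^2))) \<partial>lborel)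
       = (\<integral>\<^sup>+ y. ennreal (R^2 - y^2) * indicator {d/2..R} y
                 + ennreal (R^2 - (y - d)^2) * indicator {d-R..d/2} y \<partial>lborel)"
    by (intro nn_integral_cong_AE) (auto elim!: eventually_mono intro: lens_section_split[OF R d])
  also have "\<dots> = (\<integral>\<^sup>+ y. ennreal (R^2 - y^2) * indicator {d/2..R} y \<partial>lborel)
                 + (\<integral>\<^sup>+ y. ennreal (R^2 - (y - d)^2) * indicator {d-R..d/2} y \<partial>lborel)"
    by (rule nn_integral_add) auto
  also have "(\<integral>\<^sup>+ y. ennreal (R^2 - y^2) * indicator {d/2..R} y \<partial>lborel) = ennreal I"
  proof (rule nn_integral_has_integral_lebesgue')
    show "((\<lambda>y. R^2 - y^2) has_integral I) {d/2..R}"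
      using has_integral_sq_sub_sq[OF a1, of R 0] by (simp add: I_def)
    fix y assume "y \<in> {d/2..R}"
    then have "\<bar>y\<bar> \<le> R" using d by auto
    then show "0 \<le> R^2 - y^2" by (metis abs_le_square_iff abs_of_pos R diff_ge_0_iff_ge)
  qed
  also have "(\<integral>\<^sup>+ y. ennreal (R^2 - (y - d)^2) * indicator {d-R..d/2} y \<partial>lborel) = ennreal I"
  proof (rule nn_integral_has_integral_lebesgue')
    have "(R^2 * (d/2) - (d/2 - d)^3 / 3) - (R^2 * (d - R) - (d - R - d)^3 / 3) = I"
      by (simp add: I_def power3_eq_cube power2_eq_square field_simps)
    then show "((\<lambda>y. R^2 - (y - d)^2) has_integral I) {d-R..d/2}"
      using has_integral_sq_sub_sq[OF a2, of R d] by simp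
    fix y assume "y \<in> {d-R..d/2}"
    then have "\<bar>y - d\<bar> \<le> R" using d by auto
    then show "0 \<le> R^2 - (y - d)^2" by (metis abs_le_square_iff abs_of_pos R diff_ge_0_iff_ge)
  qed
  also have "ennreal I + ennreal I = ennreal (4 * R^3 / 3 - R^2 * d + d^3 / 12)"
    using I_nonneg
    by (subst ennreal_plus[symmetric]) (auto simp: I_def power3_eq_cube power2_eq_square field_simps)
  finally show ?thesis .
qed

lemma emeasure_PiM_disc:
  fixes A :: "'i set"
  assumes A: "finite A" "card A = 2" and m: "m \<noteq> 0"
  shows "emeasure (Pi\<^sub>M A (\<lambda>_. lborel)) ({g. (\<Sum>i\<in>A. (g i)^2) \<le> m} \<inter> space (Pi\<^sub>M A (\<lambda>_. lborel)))
       = ennreal (pi * max 0 m)"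
proof (cases "m > 0")
  case True
  have "{g. (\<Sum>i\<in>A. (g i)^2) \<le> m} = {g. sqrt (\<Sum>i\<in>A. (g i)^2) \<le> sqrt m}"
    by (auto simp: real_sqrt_le_iff)
  moreover have "emeasure (Pi\<^sub>M A (\<lambda>_. lborel))
        ({g. sqrt (\<Sum>i\<in>A. (g i)^2) \<le> sqrt m} \<inter> space (Pi\<^sub>M A (\<lambda>_. lborel)))
      = ennreal (unit_ball_vol (real (card A)) * sqrt m ^ card A)"
    using True A(1) by (intro emeasure_cball_aux) auto
  moreover have "unit_ball_vol 2 = pi"
    using unit_ball_vol_even[of 1] by simp
  ultimately show ?thesis using True A(2) by simp
next
  case False
  then have "m < 0" using m by simp
  then have "{g. (\<Sum>i\<in>A. (g i)^2) \<le> m} = {}"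
    by (auto simp: not_le intro: less_le_trans[OF _ sum_nonneg]) 
  then show ?thesis using \<open>m < 0\<close> by simp
qed

lemma emeasure_PiM_lens:
  fixes A :: "'i set" and e :: 'i
  assumes A: "finite A" "e \<notin> A" "card A = 2" and R: "R > 0" and d: "0 \<le> d" "d \<le> 2 * R"
  shows "emeasure (Pi\<^sub>M (insert e A) (\<lambda>_. lborel))
     ({f. (\<Sum>i\<in>insert e A. (f i)^2) \<le> R^2 \<and>
          (\<Sum>i\<in>insert e A. (f i - (if i = e then d else 0))^2) \<le> R^2}
       \<inter> space (Pi\<^sub>M (insert e A) (\<lambda>_. lborel)))
     = ennreal (pi * (4 * R^3 / 3 - R^2 * d + d^3 / 12))"
proof -
  interpret product_sigma_finite "\<lambda>_. lborel :: real measure" by standard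
  define m where "m y = min (R^2 - y^2) (R^2 - (y - d)^2)" for y
  let ?S = "{f. (\<Sum>i\<in>insert e A. (f i)^2) \<le> R^2 \<and>
               (\<Sum>i\<in>insert e A. (f i - (if i = e then d else 0))^2) \<le> R^2}
       \<inter> space (Pi\<^sub>M (insert e A) (\<lambda>_. lborel))"
  let ?D = "\<lambda>y. {g. (\<Sum>i\<in>A. (g i)^2) \<le> m y} \<inter> space (Pi\<^sub>M A (\<lambda>_. lborel))"
  have "emeasure (Pi\<^sub>M (insert e A) (\<lambda>_. lborel)) ?S
      = nn_integral (Pi\<^sub>M (insert e A) (\<lambda>_. lborel)) (indicator ?S)"
    by (subst nn_integral_indicator) auto
  also have "\<dots> = (\<integral>\<^sup>+ y. \<integral>\<^sup>+ g. indicator ?S (g(e := y)) \<partial>Pi\<^sub>M A (\<lambda>_. lborel) \<partial>lborel)"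
    using A by (subst product_nn_integral_insert_rev) auto
  also have "\<dots> = (\<integral>\<^sup>+ y. \<integral>\<^sup>+ g. indicator (?D y) g \<partial>Pi\<^sub>M A (\<lambda>_. lborel) \<partial>lborel)"
  proof (intro nn_integral_cong)
    fix y :: real and g :: "'i \<Rightarrow> real" assume g: "g \<in> space (Pi\<^sub>M A (\<lambda>_. lborel))"
    have s1: "(\<Sum>i\<in>insert e A. (if i = e then y else g i)^2) = y^2 + (\<Sum>i\<in>A. (g i)^2)"
      using A by (simp add: sum.insert) (intro sum.cong, auto)
    have s2: "(\<Sum>i\<in>insert e A. ((if i = e then y else g i) - (if i = e then d else 0))^2)
        = (y - d)^2 + (\<Sum>i\<in>A. (g i)^2)"
      using A by (simp add: sum.insert) (intro sum.cong, auto)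
    have "g(e := y) \<in> space (Pi\<^sub>M (insert e A) (\<lambda>_. lborel))"
      using g A by (auto simp: space_PiM PiE_def extensional_def)
    then show "indicator ?S (g(e := y)) = indicator (?D y) g"
      using g unfolding indicator_def by (auto simp: s1 s2 m_def)
  qed
  also have "\<dots> = (\<integral>\<^sup>+ y. emeasure (Pi\<^sub>M A (\<lambda>_. lborel)) (?D y) \<partial>lborel)"
    by (intro nn_integral_cong, subst nn_integral_indicator) auto
  also have "\<dots> = (\<integral>\<^sup>+ y. ennreal pi * ennreal (max 0 (m y)) \<partial>lborel)"
  proof (intro nn_integral_cong_AE)
    have "AE y in lborel. y \<notin> {R, -R, d + R, d - R}"
      by (intro AE_not_in countable_imp_null_set_lborel) auto
    then show "AE y in lborel. emeasure (Pi\<^sub>M A (\<lambda>_. lborel)) (?D y) = ennreal pi * ennreal (max 0 (m y))"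
    proof eventually_elim
      case (elim y)
      have "m y \<noteq> 0"
      proof
        assume "m y = 0"
        then have "R^2 = y^2 \<or> R^2 = (y - d)^2" unfolding m_def by (auto simp: min_def split: if_splits)
        then have "R = \<bar>y\<bar> \<or> R = \<bar>y - d\<bar>"
          using R by (metis abs_of_pos power2_eq_iff_nonneg abs_ge_zero less_imp_le real_sqrt_abs real_sqrt_unique)
        then show False using elim by (auto simp: abs_if split: if_splits)
      qed
      then show ?case
        using emeasure_PiM_disc[OF A(1,3)] by (simp add: ennreal_mult)
    qed
  qed
  also have "\<dots> = ennreal pi * ennreal (4 * R^3 / 3 - R^2 * d + d^3 / 12)"
    using nn_integral_lens_section[OF R d] by (simp add: nn_integral_cmult m_def)
  also have "\<dots> = ennreal (pi * (4 * R^3 / 3 - R^2 * d + d^3 / 12))"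
    by (rule ennreal_mult'[symmetric]) simp
  finally show ?thesis .
qed

lemma emeasure_cball_Int_cball_Basis:
  fixes e :: "'a::euclidean_space"
  assumes e: "e \<in> Basis" and dim: "DIM('a) = 3" and R: "R > 0" and d: "0 \<le> d" "d \<le> 2 * R"
  shows "emeasure lborel (cball 0 R \<inter> cball (d *\<^sub>R e) R) = ennreal (pi * (4 * R^3 / 3 - R^2 * d + d^3 / 12))"
proof -
  define A where "A = Basis - {e}"
  have BA: "Basis = insert e A" using e by (auto simp: A_def)
  have A: "finite A" "e \<notin> A" "card A = 2" using e dim by (auto simp: A_def card_Diff_singleton)
  define coord :: "('a \<Rightarrow> real) \<Rightarrow> 'a" where "coord f = (\<Sum>b\<in>Basis. f b *\<^sub>R b)" for f
  have inner_coord: "coord f \<bullet> i = f i" if "i \<in> Basis" for f i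
    using that by (simp add: coord_def inner_sum_left inner_Basis if_distrib sum.delta cong: if_cong)
  have norm_coord: "norm (coord f) = sqrt (\<Sum>i\<in>Basis. (f i)^2)" for f
    unfolding euclidean_dist_l2[of 0, simplified] L2_set_def
    by (intro arg_cong[where f = sqrt] sum.cong refl) (simp add: inner_coord dist_real_def power2_abs)
  have dist_coord: "dist (d *\<^sub>R e) (coord f) = sqrt (\<Sum>i\<in>Basis. (f i - (if i = e then d else 0))^2)" for f
    unfolding euclidean_dist_l2[of "d *\<^sub>R e"] L2_set_def
    by (intro arg_cong[where f = sqrt] sum.cong refl)
      (use e in \<open>auto simp: inner_coord inner_Basis dist_real_def power2_abs power2_commute\<close>)
  have preimage: "coord -` (cball 0 R \<inter> cball (d *\<^sub>R e) R) =
      {f. (\<Sum>i\<in>Basis. (f i)^2) \<le> R^2 \<and> (\<Sum>i\<in>Basis. (f i - (if i = e then d else 0))^2) \<le> R^2}"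
    using R by (auto simp: norm_coord dist_coord real_sqrt_le_iff' sum_nonneg)
  have "emeasure lborel (cball 0 R \<inter> cball (d *\<^sub>R e) R)
      = emeasure (distr (Pi\<^sub>M Basis (\<lambda>_. lborel)) borel coord) (cball 0 R \<inter> cball (d *\<^sub>R e) R)"
    by (simp only: coord_def[abs_def] lborel_eq[symmetric])
  also have "\<dots> = emeasure (Pi\<^sub>M Basis (\<lambda>_. lborel))
      (coord -` (cball 0 R \<inter> cball (d *\<^sub>R e) R) \<inter> space (Pi\<^sub>M Basis (\<lambda>_. lborel)))"
    by (rule emeasure_distr) (auto simp: coord_def[abs_def])
  also have "\<dots> = ennreal (pi * (4 * R^3 / 3 - R^2 * d + d^3 / 12))"
    unfolding preimage BA by (rule emeasure_PiM_lens[OF A R d])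
  finally show ?thesis .
qed

lemma measure_cball_Int_cball_eq_axis:
  fixes a b e :: "real^3"
  assumes "norm e = 1"
  shows "measure lebesgue (cball a R \<inter> cball b R) = measure lborel (cball 0 R \<inter> cball (dist a b *\<^sub>R e) R)"
proof -
  define v where "v = b - a"
  have "norm v = norm (dist a b *\<^sub>R e)"
    using assms by (simp add: v_def dist_norm norm_minus_commute)
  then obtain f where f: "orthogonal_transformation f" "f v = dist a b *\<^sub>R e"
    by (rule orthogonal_transformation_exists)
  have shift: "(\<lambda>z. z - a) ` (cball a R \<inter> cball b R) = cball 0 R \<inter> cball v R"
  proof (intro equalityI subsetI)
    fix z assume "z \<in> (\<lambda>z. z - a) ` (cball a R \<inter> cball b R)"
    then show "z \<in> cball 0 R \<inter> cball v R" by (auto simp: v_def dist_norm algebra_simps)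
  next
    fix z assume "z \<in> cball 0 R \<inter> cball v R"
    then have "z + a \<in> cball a R \<inter> cball b R" by (auto simp: v_def dist_norm algebra_simps)
    then show "z \<in> (\<lambda>z. z - a) ` (cball a R \<inter> cball b R)" by (rule rev_image_eqI) simp
  qed
  have rotate: "f ` (cball 0 R \<inter> cball v R) = cball 0 R \<inter> cball (dist a b *\<^sub>R e) R"
  proof -
    have "f ` (cball 0 R \<inter> cball v R) = cball (f 0) R \<inter> cball (f v) R"
      using orthogonal_transformation_inj[OF f(1)] image_orthogonal_transformation_cball[OF f(1)]
      by (simp add: image_Int)
    moreover have "f 0 = 0" using orthogonal_transformation_linear[OF f(1)] by (simp add: linear_0)
    ultimately show ?thesis using f(2) by simp
  qed
  have lmeasurable: "cball 0 R \<inter> cball v R \<in> lmeasurable"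
    by (intro lmeasurable_compact compact_Int_closed) auto
  have "measure lebesgue (cball a R \<inter> cball b R) = measure lebesgue (cball 0 R \<inter> cball v R)"
    using measure_translation_subtract[of a "cball a R \<inter> cball b R"] shift by simp
  also have "\<dots> = measure lebesgue (f ` (cball 0 R \<inter> cball v R))"
    by (rule measure_orthogonal_image[OF f(1) lmeasurable, symmetric])
  also have "\<dots> = measure lborel (cball 0 R \<inter> cball (dist a b *\<^sub>R e) R)"
    unfolding rotate by (rule measure_completion) auto
  finally show ?thesis .
qed

lemma measure_cball_Int_cball:
  fixes a b :: "real^3"
  assumes R: "R > 0"
  shows "measure lebesgue (cball a R \<inter> cball b R) = 4 * pi / 3 * R^3 * spherical_kernel (dist a b / (2 * R))"
proof (cases "dist a b \<le> 2 * R")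
  case True
  obtain e :: "real^3" where e: "e \<in> Basis" using nonempty_Basis by blast
  then have "norm e = 1" by simp
  have "dist a b \<ge> 0" by simp
  note lens = spherical_kernel_lens_volume[OF R this True]
  have "spherical_kernel (dist a b / (2 * R)) \<ge> 0"
    using R by (simp add: spherical_kernel_def)
  then have "pi * (4 * R^3 / 3 - R^2 * dist a b + dist a b ^ 3 / 12) \<ge> 0"
    unfolding lens[symmetric] using R by simp
  then show ?thesis
    using measure_cball_Int_cball_eq_axis[OF \<open>norm e = 1\<close>, of a R b]
      emeasure_cball_Int_cball_Basis[OF e _ R \<open>dist a b \<ge> 0\<close> True] lens
    by (simp add: measure_def)
next
  case False
  have "cball a R \<inter> cball b R = {}"
  proof (rule ccontr)
    assume "cball a R \<inter> cball b R \<noteq> {}"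
    then obtain z where "dist a z \<le> R" "dist b z \<le> R" by auto
    then have "dist a b \<le> 2 * R" using dist_triangle3[of a b z] by (simp add: dist_commute)
    then show False using False by simp
  qed
  moreover have "spherical_kernel (dist a b / (2 * R)) = 0"
    using False R by (simp add: spherical_kernel_def field_simps)
  ultimately show ?thesis by simp
qed

lemma scalar_pd_in_spherical_kernel:
  assumes "t > 0"
  shows "scalar_pd_in TYPE(real^3) (\<lambda>r. spherical_kernel (r / t))"
  unfolding scalar_pd_in_def
proof (intro allI)
  fix p :: nat and x :: "nat \<Rightarrow> real^3" and c :: "nat \<Rightarrow> real"
  define R where "R = t / 2"
  have R: "R > 0" using assms by (simp add: R_def)
  define V where "V = 4 * pi / 3 * R^3"
  have V: "V > 0" using R by (simp add: V_def)
  have overlap: "spherical_kernel (norm (x i - x j) / t) = measure lebesgue (cball (x i) R \<inter> cball (x j) R) / V" for i j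
    using measure_cball_Int_cball[OF R, of "x i" "x j"] V assms
    by (simp add: V_def R_def dist_norm)
  have "0 \<le> (\<Sum>i<p. \<Sum>j<p. c i * measure lebesgue (cball (x i) R \<inter> cball (x j) R) * c j) / V"
    using V R gram_measure_Int_nonneg[where A = "\<lambda>i. cball (x i) R" and M = lebesgue and c = c and p = p]
    by (simp add: lmeasurable_cball fmeasurableD emeasure_cball)
  also have "\<dots> = (\<Sum>i<p. \<Sum>j<p. c i * spherical_kernel (norm (x i - x j) / t) * c j)"
    by (simp only: sum_divide_distrib overlap times_divide_eq_right times_divide_eq_left)
  finally show "(\<Sum>i<p. \<Sum>j<p. c i * spherical_kernel (norm (x i - x j) / t) * c j) \<ge> 0" .
qed

section \<open>Scale mixtures of a kernel\<close>

definition scale_mixture :: "(real \<Rightarrow> real) \<Rightarrow> (real \<Rightarrow> real) \<Rightarrow> real \<Rightarrow> real" where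
  "scale_mixture \<kappa> h r = (LINT t:{0<..}|lborel. \<kappa> (r / t) * h t)"

lemma set_integrable_scale_mixture:
  fixes \<kappa> h :: "real \<Rightarrow> real"
  assumes \<kappa>: "continuous_on UNIV \<kappa>" "\<And>s. s \<ge> 0 \<Longrightarrow> \<bar>\<kappa> s\<bar> \<le> 1"
    and h: "set_integrable lborel {0<..} h" and r: "r \<ge> 0"
  shows "set_integrable lborel {0<..} (\<lambda>t. \<kappa> (r / t) * h t)"
proof (rule set_integrable_bound[OF h])
  have "(\<lambda>t. \<kappa> (r / t)) \<in> borel_measurable lborel"
    using measurable_compose[OF _ borel_measurable_continuous_onI[OF \<kappa>(1)], of "\<lambda>t. r / t" lborel]
    by simp
  moreover have "(\<lambda>t. indicator {0<..} t * h t) \<in> borel_measurable lborel"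
    using h by (simp add: set_integrable_def borel_measurable_integrable)
  ultimately have "(\<lambda>t. \<kappa> (r / t) * (indicator {0<..} t * h t)) \<in> borel_measurable lborel"
    by (rule borel_measurable_times)
  then show "set_borel_measurable lborel {0<..} (\<lambda>t. \<kappa> (r / t) * h t)"
    by (simp add: set_borel_measurable_def mult_ac)
  show "AE t\<in>{0<..} in lborel. norm (\<kappa> (r / t) * h t) \<le> norm (h t)"
  proof (rule AE_I2, intro impI)
    fix t :: real assume "t \<in> {0<..}"
    then have "\<bar>\<kappa> (r / t)\<bar> \<le> 1" using r by (intro \<kappa>(2)) simp
    then show "norm (\<kappa> (r / t) * h t) \<le> norm (h t)"
      by (simp add: abs_mult mult_left_le_one_le)
  qed
qed

lemma scale_mixture_at_0:
  fixes \<kappa> h \<psi> :: "real \<Rightarrow> real"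
  assumes \<kappa>: "continuous_on UNIV \<kappa>" "\<And>s. s \<ge> 0 \<Longrightarrow> \<bar>\<kappa> s\<bar> \<le> 1"
    and h: "set_integrable lborel {0<..} h"
    and \<psi>: "continuous_on {0..} \<psi>" "\<And>r. r > 0 \<Longrightarrow> \<psi> r = scale_mixture \<kappa> h r"
  shows "\<psi> 0 = scale_mixture \<kappa> h 0"
proof -
  define r where "r n = 1 / real (Suc n)" for n
  have r_pos: "r n > 0" for n by (simp add: r_def)
  have r_lim: "r \<longlonglongrightarrow> 0" unfolding r_def by (rule LIMSEQ_Suc[OF lim_const_over_n])
  define s where "s x t = indicator {0<..} t * (\<kappa> (x / t) * h t)" for x t
  have int_s: "integrable lborel (s x)" if "x \<ge> 0" for x
    using set_integrable_scale_mixture[OF \<kappa> h that] by (simp add: s_def[abs_def] set_integrable_def)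
  have seq: "(\<lambda>n. \<psi> (r n)) = (\<lambda>n. LINT t|lborel. s (r n) t)"
    using \<psi>(2)[OF r_pos] by (simp add: fun_eq_iff scale_mixture_def set_lebesgue_integral_def s_def)
  have at_0: "scale_mixture \<kappa> h 0 = (LINT t|lborel. s 0 t)"
    unfolding scale_mixture_def set_lebesgue_integral_def s_def by (simp only: real_scaleR_def)
  have "(\<lambda>n. \<psi> (r n)) \<longlonglongrightarrow> \<psi> 0"
    by (rule continuous_on_tendsto_compose[OF \<psi>(1) r_lim]) (auto simp: less_imp_le[OF r_pos])
  moreover have "(\<lambda>n. \<psi> (r n)) \<longlonglongrightarrow> scale_mixture \<kappa> h 0"
    unfolding seq at_0
  proof (rule integral_dominated_convergence[where w = "\<lambda>t. norm (indicator {0<..} t * h t)"])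
    show "s 0 \<in> borel_measurable lborel" "s (r n) \<in> borel_measurable lborel" for n
      using int_s[of 0] int_s[of "r n"] r_pos[of n] by auto
    show "integrable lborel (\<lambda>t. norm (indicator {0<..} t * h t))"
      using h by (simp add: set_integrable_def)
    show "AE t in lborel. (\<lambda>n. s (r n) t) \<longlonglongrightarrow> s 0 t"
    proof (rule AE_I2)
      fix t :: real
      have "(\<lambda>n. r n / t) \<longlonglongrightarrow> 0 / t" using tendsto_divide_zero[OF r_lim, of t] by simp
      then have "(\<lambda>n. \<kappa> (r n / t)) \<longlonglongrightarrow> \<kappa> (0 / t)"
        by (rule continuous_on_tendsto_compose[OF \<kappa>(1)]) auto
      then show "(\<lambda>n. s (r n) t) \<longlonglongrightarrow> s 0 t"
        unfolding s_def by (intro tendsto_intros)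
    qed
    show "AE t in lborel. norm (s (r n) t) \<le> norm (indicator {0<..} t * h t :: real)" for n
    proof (rule AE_I2)
      fix t :: real
      show "norm (s (r n) t) \<le> norm (indicator {0<..} t * h t :: real)"
      proof (cases "t > 0")
        case True
        then have "\<bar>\<kappa> (r n / t)\<bar> \<le> 1" using r_pos[of n] by (intro \<kappa>(2)) simp
        with True show ?thesis by (simp add: s_def abs_mult mult_left_le_one_le)
      qed (simp add: s_def)
    qed
  qed
  ultimately show ?thesis by (rule LIMSEQ_unique)
qed

lemma gram_sum_block_nonneg:
  fixes K :: "nat \<Rightarrow> nat \<Rightarrow> real" and u v :: "nat \<Rightarrow> real" and \<alpha> \<beta> \<gamma> :: real
  assumes K: "\<And>c. (\<Sum>i<p. \<Sum>j<p. c i * K i j * c j) \<ge> 0"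
    and \<alpha>: "\<alpha> \<ge> 0" and \<gamma>: "\<gamma> \<ge> 0" and \<beta>: "\<beta>^2 \<le> \<alpha> * \<gamma>"
  shows "(\<Sum>i<p. \<Sum>j<p. (\<alpha> * (u i * u j) + \<beta> * (u i * v j + v i * u j) + \<gamma> * (v i * v j)) * K i j) \<ge> 0"
proof (cases "\<alpha> = 0")
  case True
  with \<beta> have "\<beta> = 0" by simp
  with True have "(\<Sum>i<p. \<Sum>j<p. (\<alpha> * (u i * u j) + \<beta> * (u i * v j + v i * u j) + \<gamma> * (v i * v j)) * K i j)
      = \<gamma> * (\<Sum>i<p. \<Sum>j<p. v i * K i j * v j)"
    by (simp add: sum_distrib_left mult_ac)
  then show ?thesis using \<gamma> K[of v] by simp
next
  case False
  with \<alpha> have "\<alpha> > 0" by simp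
  define w where "w i = u i + \<beta> / \<alpha> * v i" for i
    \<comment> \<open>completing the square in the coefficient matrix\<close>
  have "\<gamma> - \<beta>^2 / \<alpha> \<ge> 0" using \<beta> \<open>\<alpha> > 0\<close> by (simp add: field_simps)
  have "(\<Sum>i<p. \<Sum>j<p. (\<alpha> * (u i * u j) + \<beta> * (u i * v j + v i * u j) + \<gamma> * (v i * v j)) * K i j)
      = (\<Sum>i<p. \<Sum>j<p. \<alpha> * (w i * K i j * w j) + (\<gamma> - \<beta>^2 / \<alpha>) * (v i * K i j * v j))"
    using \<open>\<alpha> > 0\<close> by (intro sum.cong refl) (simp add: w_def field_simps power2_eq_square)
  also have "\<dots> = \<alpha> * (\<Sum>i<p. \<Sum>j<p. w i * K i j * w j)
      + (\<gamma> - \<beta>^2 / \<alpha>) * (\<Sum>i<p. \<Sum>j<p. v i * K i j * v j)"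
    by (simp add: sum.distrib sum_distrib_left)
  also have "\<dots> \<ge> 0"
    using \<alpha> \<open>\<gamma> - \<beta>^2 / \<alpha> \<ge> 0\<close> K[of w] K[of v] by simp
  finally show ?thesis .
qed

lemma inner_cov_matrix_mult:
  "a \<bullet> (cov_matrix \<sigma>1 \<sigma>2 \<rho> \<psi>11 \<psi>12 \<psi>22 r *v b) =
     \<sigma>1^2 * \<psi>11 r * (a$1 * b$1) + \<rho> * \<sigma>1 * \<sigma>2 * \<psi>12 r * (a$1 * b$2 + a$2 * b$1)
     + \<sigma>2^2 * \<psi>22 r * (a$2 * b$2)"
  by (simp add: cov_matrix_def inner_vec_def matrix_vector_mult_def sum_2 vector_2 algebra_simps)

lemma matrix_pd_in_scale_mixtures:
  fixes \<kappa> h\<^sub>1\<^sub>1 h\<^sub>1\<^sub>2 h\<^sub>2\<^sub>2 \<psi>11 \<psi>12 \<psi>22 :: "real \<Rightarrow> real" and \<sigma>1 \<sigma>2 \<rho> :: real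
  assumes pd: "\<And>t. t > 0 \<Longrightarrow> scalar_pd_in TYPE('a::real_normed_vector) (\<lambda>r. \<kappa> (r / t))"
    and \<kappa>: "continuous_on UNIV \<kappa>" "\<And>s. s \<ge> 0 \<Longrightarrow> \<bar>\<kappa> s\<bar> \<le> 1"
    and h: "set_integrable lborel {0<..} h\<^sub>1\<^sub>1" "set_integrable lborel {0<..} h\<^sub>1\<^sub>2"
      "set_integrable lborel {0<..} h\<^sub>2\<^sub>2"
    and mix: "\<And>r. r \<ge> 0 \<Longrightarrow> \<psi>11 r = scale_mixture \<kappa> h\<^sub>1\<^sub>1 r"
      "\<And>r. r \<ge> 0 \<Longrightarrow> \<psi>12 r = scale_mixture \<kappa> h\<^sub>1\<^sub>2 r"
      "\<And>r. r \<ge> 0 \<Longrightarrow> \<psi>22 r = scale_mixture \<kappa> h\<^sub>2\<^sub>2 r"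
    and nonneg: "\<And>t. t > 0 \<Longrightarrow> h\<^sub>1\<^sub>1 t \<ge> 0" "\<And>t. t > 0 \<Longrightarrow> h\<^sub>2\<^sub>2 t \<ge> 0"
    and cs: "\<And>t. t > 0 \<Longrightarrow> \<rho>^2 * (h\<^sub>1\<^sub>2 t)^2 \<le> h\<^sub>1\<^sub>1 t * h\<^sub>2\<^sub>2 t"
  shows "matrix_pd_in TYPE('a) (cov_matrix \<sigma>1 \<sigma>2 \<rho> \<psi>11 \<psi>12 \<psi>22)"
  unfolding matrix_pd_in_def
proof (intro allI)
  fix p :: nat and x :: "nat \<Rightarrow> 'a" and a :: "nat \<Rightarrow> real^2"
  define d where "d i j = norm (x i - x j)" for i j
  define u where "u i = a i $ 1" for i
  define v where "v i = a i $ 2" for i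
  define H where "H h i j t = indicator {0<..} t * (\<kappa> (d i j / t) * h t)" for h i j t
  define G where "G i j t = \<sigma>1^2 * (u i * u j) * H h\<^sub>1\<^sub>1 i j t
      + \<rho> * \<sigma>1 * \<sigma>2 * (u i * v j + v i * u j) * H h\<^sub>1\<^sub>2 i j t + \<sigma>2^2 * (v i * v j) * H h\<^sub>2\<^sub>2 i j t"
    for i j t
  have int_H: "integrable lborel (H h i j)" if "set_integrable lborel {0<..} h" for h i j
    using set_integrable_scale_mixture[OF \<kappa> that, of "d i j"]
    by (simp add: H_def[abs_def] d_def set_integrable_def)
  have int_G: "integrable lborel (G i j)" for i j
    unfolding G_def using int_H[OF h(1)] int_H[OF h(2)] int_H[OF h(3)] by auto
  have entry: "a i \<bullet> (cov_matrix \<sigma>1 \<sigma>2 \<rho> \<psi>11 \<psi>12 \<psi>22 (d i j) *v a j) = (LINT t|lborel. G i j t)"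
    for i j
  proof -
    have "d i j \<ge> 0" by (simp add: d_def)
    then have "a i \<bullet> (cov_matrix \<sigma>1 \<sigma>2 \<rho> \<psi>11 \<psi>12 \<psi>22 (d i j) *v a j)
        = \<sigma>1^2 * (u i * u j) * (LINT t|lborel. H h\<^sub>1\<^sub>1 i j t)
          + \<rho> * \<sigma>1 * \<sigma>2 * (u i * v j + v i * u j) * (LINT t|lborel. H h\<^sub>1\<^sub>2 i j t)
          + \<sigma>2^2 * (v i * v j) * (LINT t|lborel. H h\<^sub>2\<^sub>2 i j t)"
      by (simp add: inner_cov_matrix_mult mix scale_mixture_def set_lebesgue_integral_def
          H_def u_def v_def algebra_simps)
    also have "\<dots> = (LINT t|lborel. G i j t)"
      unfolding G_def using int_H[OF h(1)] int_H[OF h(2)] int_H[OF h(3)] by simp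
    finally show ?thesis .
  qed
  have "(\<Sum>i<p. \<Sum>j<p. a i \<bullet> (cov_matrix \<sigma>1 \<sigma>2 \<rho> \<psi>11 \<psi>12 \<psi>22 (norm (x i - x j)) *v a j))
      = (LINT t|lborel. (\<Sum>i<p. \<Sum>j<p. G i j t))"
    using int_G by (simp add: entry[unfolded d_def] integrable_sum)
  also have "\<dots> \<ge> 0"
  proof (rule integral_nonneg_AE, rule AE_I2)
    fix t :: real
    show "0 \<le> (\<Sum>i<p. \<Sum>j<p. G i j t)"
    proof (cases "t > 0")
      case False
      then show ?thesis by (simp add: G_def H_def)
    next
      case True
      have "(\<Sum>i<p. \<Sum>j<p. G i j t) = (\<Sum>i<p. \<Sum>j<p. (\<sigma>1^2 * h\<^sub>1\<^sub>1 t * (u i * u j)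
          + \<rho> * \<sigma>1 * \<sigma>2 * h\<^sub>1\<^sub>2 t * (u i * v j + v i * u j) + \<sigma>2^2 * h\<^sub>2\<^sub>2 t * (v i * v j)) * \<kappa> (d i j / t))"
        using True by (intro sum.cong refl) (simp add: G_def H_def algebra_simps)
      also have "\<dots> \<ge> 0"
      proof (rule gram_sum_block_nonneg)
        show "(\<Sum>i<p. \<Sum>j<p. c i * \<kappa> (d i j / t) * c j) \<ge> 0" for c
          using pd[OF True] by (simp add: scalar_pd_in_def d_def)
        show "\<sigma>1^2 * h\<^sub>1\<^sub>1 t \<ge> 0" "\<sigma>2^2 * h\<^sub>2\<^sub>2 t \<ge> 0" using nonneg True by simp_all
        have "(\<rho> * \<sigma>1 * \<sigma>2 * h\<^sub>1\<^sub>2 t)^2 = (\<sigma>1^2 * \<sigma>2^2) * (\<rho>^2 * (h\<^sub>1\<^sub>2 t)^2)"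
          by (simp add: power_mult_distrib)
        also have "\<dots> \<le> (\<sigma>1^2 * \<sigma>2^2) * (h\<^sub>1\<^sub>1 t * h\<^sub>2\<^sub>2 t)"
          using cs[OF True] by (intro mult_left_mono) simp_all
        also have "\<dots> = (\<sigma>1^2 * h\<^sub>1\<^sub>1 t) * (\<sigma>2^2 * h\<^sub>2\<^sub>2 t)" by (simp add: mult_ac)
        finally show "(\<rho> * \<sigma>1 * \<sigma>2 * h\<^sub>1\<^sub>2 t)^2 \<le> (\<sigma>1^2 * h\<^sub>1\<^sub>1 t) * (\<sigma>2^2 * h\<^sub>2\<^sub>2 t)" .
      qed
      finally show ?thesis .
    qed
  qed
  finally show "(\<Sum>i<p. \<Sum>j<p. a i \<bullet> (cov_matrix \<sigma>1 \<sigma>2 \<rho> \<psi>11 \<psi>12 \<psi>22 (norm (x i - x j)) *v a j)) \<ge> 0" .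
qed

section \<open>Scale mixture representations by integration by parts\<close>

lemma Ck_on_has_real_derivative:
  assumes "Ck_on k f S" and "x \<in> S" and "m < k"
  shows "((deriv ^^ m) f has_real_derivative (deriv ^^ Suc m) f x) (at x)"
  using assms unfolding Ck_on_def by (simp add: DERIV_deriv_iff_real_differentiable)

lemma Ck_on_isCont:
  assumes "Ck_on k f S" and "open S" and "x \<in> S"
  shows "isCont ((deriv ^^ k) f) x"
  using assms unfolding Ck_on_def by (simp add: continuous_on_eq_continuous_at)

lemma tendsto_zero_of_tendsto_mult_at_top:
  fixes f :: "real \<Rightarrow> real"
  assumes "((\<lambda>r. r * f r) \<longlongrightarrow> 0) at_top"
  shows "(f \<longlongrightarrow> 0) at_top"
proof -
  have "((\<lambda>r. (r * f r) * (1 / r)) \<longlongrightarrow> 0 * 0) at_top"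
    by (intro tendsto_mult assms tendsto_divide_0[OF tendsto_const]
        filterlim_at_top_imp_at_infinity filterlim_ident)
  moreover have "eventually (\<lambda>r. (r * f r) * (1 / r) = f r) at_top"
    using eventually_gt_at_top[of 0] by eventually_elim simp
  ultimately show ?thesis by (simp add: tendsto_cong)
qed

lemma set_integral_Ioi_derivative:
  fixes F f :: "real \<Rightarrow> real"
  assumes F: "\<And>t. t > a \<Longrightarrow> (F has_real_derivative f t) (at t)"
    and f: "\<And>t. t > a \<Longrightarrow> isCont f t"
    and F_a: "isCont F a" and F_top: "(F \<longlongrightarrow> 0) at_top"
    and int: "set_integrable lborel {a<..} f"
  shows "(LINT t:{a<..}|lborel. f t) = - F a"
proof -
  have "(LBINT t=ereal a..\<infinity>. f t) = 0 - F a"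
  proof (rule interval_integral_FTC_integrable)
    show "(F has_vector_derivative f t) (at t)" if "ereal a < ereal t" for t
      using F[of t] that by (simp add: has_real_derivative_iff_has_vector_derivative)
    show "isCont f t" if "ereal a < ereal t" for t
      using f[of t] that by simp
    have "(F \<longlongrightarrow> F a) (at_right a)"
      using F_a by (simp add: isCont_def filterlim_at_split)
    then show "((F \<circ> real_of_ereal) \<longlongrightarrow> F a) (at_right (ereal a))"
      unfolding ereal_tendsto_simps .
    show "((F \<circ> real_of_ereal) \<longlongrightarrow> 0) (at_left \<infinity>)"
      unfolding ereal_tendsto_simps by (rule F_top)
  qed (use int in simp_all)
  then show ?thesis by (simp add: interval_lebesgue_integral_def)
qed

lemma indicator_triangular_kernel:
  assumes "r > 0"
  shows "indicator {0<..} t * triangular_kernel (r / t) = indicator {r<..} t * ((t - r) / t)"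
proof (cases "t > r")
  case True
  with assms have "t > 0" by simp
  with True show ?thesis by (simp add: triangular_kernel_def field_simps)
next
  case False
  then have "triangular_kernel (r / t) = 0" if "t > 0"
    using that by (simp add: triangular_kernel_def field_simps)
  with False show ?thesis by (cases "t > 0") simp_all
qed

lemma indicator_spherical_kernel:
  assumes "r > 0"
  shows "indicator {0<..} t * spherical_kernel (r / t)
       = indicator {r<..} t * ((t - r)^2 * (2 * t + r) / (2 * t^3))"
proof (cases "t > r")
  case True
  with assms have "t > 0" by simp
  with True show ?thesis
    by (simp add: spherical_kernel_def field_simps power2_eq_square power3_eq_cube)
next
  case False
  then have "spherical_kernel (r / t) = 0" if "t > 0"
    using that by (simp add: spherical_kernel_def field_simps)
  with False show ?thesis by (cases "t > 0") simp_all
qed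

lemma scale_mixture_triangular_kernel:
  fixes \<psi> :: "real \<Rightarrow> real"
  assumes ck: "Ck_on 2 \<psi> {0<..}" and lim0: "(\<psi> \<longlongrightarrow> 0) at_top"
    and lim1: "((\<lambda>r. r * deriv \<psi> r) \<longlongrightarrow> 0) at_top"
    and int: "set_integrable lborel {0<..} (\<lambda>t. t * (deriv ^^ 2) \<psi> t)" and r: "r > 0"
  shows "scale_mixture triangular_kernel (\<lambda>t. t * (deriv ^^ 2) \<psi> t) r = \<psi> r"
proof -
  have D: "(\<psi> has_real_derivative deriv \<psi> t) (at t)"
    "(deriv \<psi> has_real_derivative (deriv ^^ 2) \<psi> t) (at t)" "isCont ((deriv ^^ 2) \<psi>) t"
    if "t > 0" for t
    using Ck_on_has_real_derivative[OF ck, of t 0] Ck_on_has_real_derivative[OF ck, of t 1]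
      Ck_on_isCont[OF ck open_greaterThan, of t] that
    by (simp_all add: numeral_2_eq_2)
  define f where "f t = (t - r) * (deriv ^^ 2) \<psi> t" for t
  have kernel_eq: "indicator {0<..} t * (triangular_kernel (r / t) * (t * (deriv ^^ 2) \<psi> t))
      = indicator {r<..} t * f t" for t
  proof -
    have "indicator {0<..} t * (triangular_kernel (r / t) * (t * (deriv ^^ 2) \<psi> t))
        = indicator {r<..} t * ((t - r) / t) * (t * (deriv ^^ 2) \<psi> t)"
      by (subst mult.assoc[symmetric]) (simp only: indicator_triangular_kernel[OF r])
    also have "\<dots> = indicator {r<..} t * f t"
    proof (cases "t > r")
      case True
      with r have "t \<noteq> 0" by simp
      then show ?thesis by (simp add: f_def)
    qed simp
    finally show ?thesis .
  qed
  have "set_integrable lborel {0<..} (\<lambda>t. triangular_kernel (r / t) * (t * (deriv ^^ 2) \<psi> t))"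
    using set_integrable_scale_mixture[OF continuous_on_triangular_kernel abs_triangular_kernel_le_one int]
      r by simp
  then have int_f: "set_integrable lborel {r<..} f"
    by (simp only: set_integrable_def real_scaleR_def kernel_eq)
  have "(LINT t:{r<..}|lborel. f t) = - ((r - r) * deriv \<psi> r - \<psi> r)"
  proof (rule set_integral_Ioi_derivative[where F = "\<lambda>t. (t - r) * deriv \<psi> t - \<psi> t", OF _ _ _ _ int_f])
    fix t assume "t > r"
    with r have "t > 0" by simp
    show "((\<lambda>t. (t - r) * deriv \<psi> t - \<psi> t) has_real_derivative f t) (at t)"
      unfolding f_def by (rule derivative_eq_intros D(1,2)[OF \<open>t > 0\<close>] | simp)+
    show "isCont f t"
      unfolding f_def using D(3)[OF \<open>t > 0\<close>] by (intro continuous_intros)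
  next
    show "isCont (\<lambda>t. (t - r) * deriv \<psi> t - \<psi> t) r"
      using DERIV_isCont[OF D(1)[OF r]] DERIV_isCont[OF D(2)[OF r]] by (intro continuous_intros) auto
    have "((\<lambda>t. t * deriv \<psi> t - r * deriv \<psi> t - \<psi> t) \<longlongrightarrow> 0 - r * 0 - 0) at_top"
      by (intro tendsto_intros lim1 lim0 tendsto_zero_of_tendsto_mult_at_top[OF lim1])
    then show "((\<lambda>t. (t - r) * deriv \<psi> t - \<psi> t) \<longlongrightarrow> 0) at_top"
      by (simp add: algebra_simps)
  qed
  then show ?thesis
    by (simp add: scale_mixture_def set_lebesgue_integral_def kernel_eq)
qed

lemma scale_mixture_spherical_kernel:
  fixes \<psi> :: "real \<Rightarrow> real"
  assumes ck: "Ck_on 3 \<psi> {0<..}" and lim0: "(\<psi> \<longlongrightarrow> 0) at_top"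
    and lim1: "((\<lambda>r. r * deriv \<psi> r) \<longlongrightarrow> 0) at_top"
    and lim2: "((\<lambda>r. r^2 * (deriv ^^ 2) \<psi> r) \<longlongrightarrow> 0) at_top"
    and int: "set_integrable lborel {0<..} (\<lambda>t. (t * (deriv ^^ 2) \<psi> t - t^2 * (deriv ^^ 3) \<psi> t) / 3)"
    and r: "r > 0"
  shows "scale_mixture spherical_kernel (\<lambda>t. (t * (deriv ^^ 2) \<psi> t - t^2 * (deriv ^^ 3) \<psi> t) / 3) r
       = \<psi> r"
proof -
  define p2 where "p2 = (deriv ^^ 2) \<psi>"
  define p3 where "p3 = (deriv ^^ 3) \<psi>"
  have D: "(\<psi> has_real_derivative deriv \<psi> t) (at t)" "(deriv \<psi> has_real_derivative p2 t) (at t)"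
    "(p2 has_real_derivative p3 t) (at t)" "isCont p3 t"
    if "t > 0" for t
    using Ck_on_has_real_derivative[OF ck, of t 0] Ck_on_has_real_derivative[OF ck, of t 1]
      Ck_on_has_real_derivative[OF ck, of t 2] Ck_on_isCont[OF ck open_greaterThan, of t] that
    by (simp_all add: p2_def p3_def numeral_2_eq_2 numeral_3_eq_3)
  define f where "f t = (t - r)^2 * (2 * t + r) / (6 * t^2) * (p2 t - t * p3 t)" for t
  define F where "F t = (t - r) * deriv \<psi> t - \<psi> t - (t - r)^2 * (2 * t + r) * p2 t / (6 * t)" for t
    \<comment> \<open>an antiderivative of \<open>f\<close> on \<open>(0, \<infinity>)\<close> with \<open>F r = - \<psi> r\<close>, found by
      integrating by parts twice\<close>
  have kernel_eq: "indicator {0<..} t * (spherical_kernel (r / t) * ((t * p2 t - t^2 * p3 t) / 3))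
      = indicator {r<..} t * f t" for t
  proof -
    have "indicator {0<..} t * (spherical_kernel (r / t) * ((t * p2 t - t^2 * p3 t) / 3))
        = indicator {r<..} t * ((t - r)^2 * (2 * t + r) / (2 * t^3)) * ((t * p2 t - t^2 * p3 t) / 3)"
      by (subst mult.assoc[symmetric]) (simp only: indicator_spherical_kernel[OF r])
    also have "\<dots> = indicator {r<..} t * f t"
    proof (cases "t > r")
      case True
      with r have "t \<noteq> 0" by simp
      then show ?thesis by (simp add: f_def field_simps power2_eq_square power3_eq_cube)
    qed simp
    finally show ?thesis .
  qed
  have "set_integrable lborel {0<..} (\<lambda>t. spherical_kernel (r / t) * ((t * p2 t - t^2 * p3 t) / 3))"
    using set_integrable_scale_mixture[OF continuous_on_spherical_kernel abs_spherical_kernel_le_one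
        int[folded p2_def p3_def]] r by simp
  then have int_f: "set_integrable lborel {r<..} f"
    by (simp only: set_integrable_def real_scaleR_def kernel_eq)
  have "(LINT t:{r<..}|lborel. f t) = - F r"
  proof (rule set_integral_Ioi_derivative[OF _ _ _ _ int_f])
    fix t assume "t > r"
    with r have "t > 0" by simp
    then show "(F has_real_derivative f t) (at t)"
      unfolding F_def f_def
      by (auto intro!: derivative_eq_intros D(1-3) simp: field_simps power2_eq_square)
    show "isCont f t"
      unfolding f_def using \<open>t > 0\<close> by (intro continuous_intros D(4) DERIV_isCont[OF D(3)]) auto
  next
    show "isCont F r"
      unfolding F_def using r
      by (intro continuous_intros DERIV_isCont[OF D(1)] DERIV_isCont[OF D(2)] DERIV_isCont[OF D(3)]) auto
    have "((\<lambda>t. t * deriv \<psi> t - r * deriv \<psi> t - \<psi> t - ((1 - r / t)^2 * (2 + r / t) / 6) * (t^2 * p2 t))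
        \<longlongrightarrow> 0 - r * 0 - 0 - ((1 - 0)^2 * (2 + 0) / 6) * 0) at_top"
      using lim2 unfolding p2_def
      by (intro tendsto_intros lim1 lim0 tendsto_zero_of_tendsto_mult_at_top[OF lim1]
          tendsto_divide_0[OF tendsto_const] filterlim_at_top_imp_at_infinity filterlim_ident) auto
    moreover have "eventually (\<lambda>t. t * deriv \<psi> t - r * deriv \<psi> t - \<psi> t
        - ((1 - r / t)^2 * (2 + r / t) / 6) * (t^2 * p2 t) = F t) at_top"
      using eventually_gt_at_top[of 0]
      by eventually_elim (simp add: F_def field_simps power2_eq_square)
    ultimately show "(F \<longlongrightarrow> 0) at_top" by (simp add: tendsto_cong)
  qed
  also have "- F r = \<psi> r" by (simp add: F_def)
  finally show ?thesis
    unfolding scale_mixture_def set_lebesgue_integral_def real_scaleR_def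
      p2_def[symmetric] p3_def[symmetric] kernel_eq .
qed

lemma sq_mult_le_of_ereal_le_INF:
  fixes a b c :: "real \<Rightarrow> real"
  assumes INF: "ereal (\<rho>^2) \<le> (INF r\<in>{r. r > 0 \<and> c r \<noteq> 0}. ereal (a r * b r / (c r)^2))"
    and "r > 0" and "a r \<ge> 0" and "b r \<ge> 0"
  shows "\<rho>^2 * (c r)^2 \<le> a r * b r"
proof (cases "c r = 0")
  case True
  with assms(3,4) show ?thesis by simp
next
  case False
  have "ereal (\<rho>^2) \<le> ereal (a r * b r / (c r)^2)"
    using INF by (rule order_trans) (use False \<open>r > 0\<close> in \<open>auto intro: INF_lower\<close>)
  then have "\<rho>^2 \<le> a r * b r / (c r)^2" by simp
  moreover have "(c r)^2 > 0" using False by simp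
  ultimately show ?thesis by (simp add: pos_le_divide_eq)
qed

lemma matrix_pd_in_real_cov_matrix:
  fixes \<sigma>1 \<sigma>2 \<rho> :: real and \<psi>11 \<psi>12 \<psi>22 :: "real \<Rightarrow> real"
  assumes cont: "\<forall>\<psi>\<in>{\<psi>11, \<psi>12, \<psi>22}. continuous_on {0..} \<psi>"
    and C2: "\<forall>\<psi>\<in>{\<psi>11, \<psi>12, \<psi>22}. Ck_on 2 \<psi> {0<..}"
    and convex: "\<forall>\<psi>\<in>{\<psi>11, \<psi>22}. \<forall>r>0. (deriv ^^ 2) \<psi> r \<ge> 0"
    and decay: "\<forall>\<psi>\<in>{\<psi>11, \<psi>12, \<psi>22}.
        (\<psi> \<longlongrightarrow> 0) at_top \<and> ((\<lambda>r. r * deriv \<psi> r) \<longlongrightarrow> 0) at_top"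
    and int: "\<forall>\<psi>\<in>{\<psi>11, \<psi>12, \<psi>22}. set_integrable lborel {0<..} (\<lambda>r. r * (deriv ^^ 2) \<psi> r)"
    and \<rho>: "ereal (\<rho>^2) \<le> (INF r\<in>{r. r > 0 \<and> (deriv ^^ 2) \<psi>12 r \<noteq> 0}.
        ereal ((deriv ^^ 2) \<psi>11 r * (deriv ^^ 2) \<psi>22 r / ((deriv ^^ 2) \<psi>12 r)^2))"
  shows "matrix_pd_in TYPE(real) (cov_matrix \<sigma>1 \<sigma>2 \<rho> \<psi>11 \<psi>12 \<psi>22)"
proof -
  have mix: "\<psi> r = scale_mixture triangular_kernel (\<lambda>t. t * (deriv ^^ 2) \<psi> t) r"
    if \<psi>: "\<psi> \<in> {\<psi>11, \<psi>12, \<psi>22}" and "r \<ge> 0" for \<psi> r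
  proof -
    have pos: "\<psi> s = scale_mixture triangular_kernel (\<lambda>t. t * (deriv ^^ 2) \<psi> t) s" if "s > 0" for s
      using scale_mixture_triangular_kernel[of \<psi> s] C2 decay int \<psi> that by auto
    have "\<psi> 0 = scale_mixture triangular_kernel (\<lambda>t. t * (deriv ^^ 2) \<psi> t) 0"
      using scale_mixture_at_0[OF continuous_on_triangular_kernel abs_triangular_kernel_le_one _ _ pos]
        int cont \<psi> by auto
    with pos \<open>r \<ge> 0\<close> show ?thesis by (cases "r = 0") auto
  qed
  show ?thesis
  proof (rule matrix_pd_in_scale_mixtures[where h\<^sub>1\<^sub>1 = "\<lambda>t. t * (deriv ^^ 2) \<psi>11 t"
        and h\<^sub>1\<^sub>2 = "\<lambda>t. t * (deriv ^^ 2) \<psi>12 t" and h\<^sub>2\<^sub>2 = "\<lambda>t. t * (deriv ^^ 2) \<psi>22 t",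
        OF scalar_pd_in_triangular_kernel continuous_on_triangular_kernel abs_triangular_kernel_le_one])
    fix t :: real assume "t > 0"
    then have "\<rho>^2 * ((deriv ^^ 2) \<psi>12 t)^2 \<le> (deriv ^^ 2) \<psi>11 t * (deriv ^^ 2) \<psi>22 t"
      using convex by (intro sq_mult_le_of_ereal_le_INF[OF \<rho>]) auto
    then have "t^2 * (\<rho>^2 * ((deriv ^^ 2) \<psi>12 t)^2) \<le> t^2 * ((deriv ^^ 2) \<psi>11 t * (deriv ^^ 2) \<psi>22 t)"
      by (rule mult_left_mono) simp
    then show "\<rho>^2 * (t * (deriv ^^ 2) \<psi>12 t)^2 \<le> (t * (deriv ^^ 2) \<psi>11 t) * (t * (deriv ^^ 2) \<psi>22 t)"
      by (simp add: power_mult_distrib power2_eq_square mult_ac)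
  qed (use int mix convex in auto)
qed

lemma matrix_pd_in_real3_cov_matrix:
  fixes \<sigma>1 \<sigma>2 \<rho> :: real and \<psi>11 \<psi>12 \<psi>22 :: "real \<Rightarrow> real"
  assumes cont: "\<forall>\<psi>\<in>{\<psi>11, \<psi>12, \<psi>22}. continuous_on {0..} \<psi>"
    and C3: "\<forall>\<psi>\<in>{\<psi>11, \<psi>12, \<psi>22}. Ck_on 3 \<psi> {0<..}"
    and convex: "\<forall>\<psi>\<in>{\<psi>11, \<psi>22}. \<forall>r>0. (deriv ^^ 2) \<psi> r - r * (deriv ^^ 3) \<psi> r \<ge> 0"
    and decay: "\<forall>\<psi>\<in>{\<psi>11, \<psi>12, \<psi>22}.
        (\<psi> \<longlongrightarrow> 0) at_top \<and> ((\<lambda>r. r * deriv \<psi> r) \<longlongrightarrow> 0) at_top \<and>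
        ((\<lambda>r. r^2 * (deriv ^^ 2) \<psi> r) \<longlongrightarrow> 0) at_top"
    and int: "\<forall>\<psi>\<in>{\<psi>11, \<psi>12, \<psi>22}.
        set_integrable lborel {0<..} (\<lambda>r. r * (deriv ^^ 2) \<psi> r - r^2 * (deriv ^^ 3) \<psi> r)"
    and \<rho>: "ereal (\<rho>^2) \<le> (INF r\<in>{r. r > 0 \<and> (deriv ^^ 2) \<psi>12 r - r * (deriv ^^ 3) \<psi>12 r \<noteq> 0}.
        ereal (((deriv ^^ 2) \<psi>11 r - r * (deriv ^^ 3) \<psi>11 r) *
               ((deriv ^^ 2) \<psi>22 r - r * (deriv ^^ 3) \<psi>22 r) /
               ((deriv ^^ 2) \<psi>12 r - r * (deriv ^^ 3) \<psi>12 r)^2))"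
  shows "matrix_pd_in TYPE(real^3) (cov_matrix \<sigma>1 \<sigma>2 \<rho> \<psi>11 \<psi>12 \<psi>22)"
proof -
  define g where "g \<psi> t = (deriv ^^ 2) \<psi> t - t * (deriv ^^ 3) \<psi> t" for \<psi> :: "real \<Rightarrow> real" and t
  define h where "h \<psi> t = (t * (deriv ^^ 2) \<psi> t - t^2 * (deriv ^^ 3) \<psi> t) / 3"
    for \<psi> :: "real \<Rightarrow> real" and t
  have h_eq: "h \<psi> t = t / 3 * g \<psi> t" for \<psi> t
    by (simp add: h_def g_def power2_eq_square field_simps)
  have int_h: "set_integrable lborel {0<..} (h \<psi>)" if "\<psi> \<in> {\<psi>11, \<psi>12, \<psi>22}" for \<psi>
    using int that unfolding h_def[abs_def] by (auto intro: set_integrable_divide)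
  have mix: "\<psi> r = scale_mixture spherical_kernel (h \<psi>) r"
    if \<psi>: "\<psi> \<in> {\<psi>11, \<psi>12, \<psi>22}" and "r \<ge> 0" for \<psi> r
  proof -
    have pos: "\<psi> s = scale_mixture spherical_kernel (h \<psi>) s" if "s > 0" for s
      using scale_mixture_spherical_kernel[of \<psi> s] C3 decay int_h[OF \<psi>] \<psi> that
      by (auto simp: h_def[abs_def])
    have "\<psi> 0 = scale_mixture spherical_kernel (h \<psi>) 0"
      using scale_mixture_at_0[OF continuous_on_spherical_kernel abs_spherical_kernel_le_one int_h[OF \<psi>] _ pos]
        cont \<psi> by auto
    with pos \<open>r \<ge> 0\<close> show ?thesis by (cases "r = 0") auto
  qed
  show ?thesis
  proof (rule matrix_pd_in_scale_mixtures[where h\<^sub>1\<^sub>1 = "h \<psi>11" and h\<^sub>1\<^sub>2 = "h \<psi>12" and h\<^sub>2\<^sub>2 = "h \<psi>22",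
        OF scalar_pd_in_spherical_kernel continuous_on_spherical_kernel abs_spherical_kernel_le_one])
    fix t :: real assume "t > 0"
    show "h \<psi>11 t \<ge> 0" "h \<psi>22 t \<ge> 0"
      using convex \<open>t > 0\<close> by (auto simp: h_eq g_def)
    have "\<rho>^2 * (g \<psi>12 t)^2 \<le> g \<psi>11 t * g \<psi>22 t"
      using convex \<open>t > 0\<close> unfolding g_def by (intro sq_mult_le_of_ereal_le_INF[OF \<rho>]) auto
    then have "(t / 3)^2 * (\<rho>^2 * (g \<psi>12 t)^2) \<le> (t / 3)^2 * (g \<psi>11 t * g \<psi>22 t)"
      by (rule mult_left_mono) simp
    then show "\<rho>^2 * (h \<psi>12 t)^2 \<le> h \<psi>11 t * h \<psi>22 t"
      by (simp add: h_eq power_mult_distrib power2_eq_square mult_ac)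
  qed (use int_h mix in auto)
qed

theorem theoremB2:
  fixes \<sigma>1 \<sigma>2 \<rho> :: real and \<psi>11 \<psi>12 \<psi>22 :: "real \<Rightarrow> real"
  assumes "\<sigma>1 > 0" and "\<sigma>2 > 0"
    and "\<forall>\<psi>\<in>{\<psi>11, \<psi>12, \<psi>22}. continuous_on {0..} \<psi>"
  shows
   "((\<forall>\<psi>\<in>{\<psi>11, \<psi>12, \<psi>22}. correlation_fun_in TYPE(real) \<psi>) \<and>
     (\<forall>\<psi>\<in>{\<psi>11, \<psi>12, \<psi>22}. Ck_on 2 \<psi> {0<..}) \<and>
     (\<forall>\<psi>\<in>{\<psi>11, \<psi>22}. \<forall>r>0. (deriv ^^ 2) \<psi> r \<ge> 0) \<and>
     (\<forall>\<psi>\<in>{\<psi>11, \<psi>12, \<psi>22}.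
        (\<psi> \<longlongrightarrow> 0) at_top \<and> ((\<lambda>r. r * deriv \<psi> r) \<longlongrightarrow> 0) at_top) \<and>
     (\<forall>\<psi>\<in>{\<psi>11, \<psi>12, \<psi>22}.
        set_integrable lborel {0<..} (\<lambda>r. r * (deriv ^^ 2) \<psi> r)) \<and>
     ereal (\<rho>^2) \<le> (INF r\<in>{r. r > 0 \<and> (deriv ^^ 2) \<psi>12 r \<noteq> 0}.
        ereal ((deriv ^^ 2) \<psi>11 r * (deriv ^^ 2) \<psi>22 r / ((deriv ^^ 2) \<psi>12 r)^2))
    \<longrightarrow> matrix_pd_in TYPE(real) (cov_matrix \<sigma>1 \<sigma>2 \<rho> \<psi>11 \<psi>12 \<psi>22))
   \<and>
   ((\<forall>\<psi>\<in>{\<psi>11, \<psi>12, \<psi>22}. correlation_fun_in TYPE(real^3) \<psi>) \<and>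
     (\<forall>\<psi>\<in>{\<psi>11, \<psi>12, \<psi>22}. Ck_on 3 \<psi> {0<..}) \<and>
     (\<forall>\<psi>\<in>{\<psi>11, \<psi>22}. \<forall>r>0. (deriv ^^ 2) \<psi> r - r * (deriv ^^ 3) \<psi> r \<ge> 0) \<and>
     (\<forall>\<psi>\<in>{\<psi>11, \<psi>12, \<psi>22}.
        (\<psi> \<longlongrightarrow> 0) at_top \<and> ((\<lambda>r. r * deriv \<psi> r) \<longlongrightarrow> 0) at_top \<and>
        ((\<lambda>r. r^2 * (deriv ^^ 2) \<psi> r) \<longlongrightarrow> 0) at_top) \<and>
     (\<forall>\<psi>\<in>{\<psi>11, \<psi>12, \<psi>22}.
        set_integrable lborel {0<..} (\<lambda>r. r * (deriv ^^ 2) \<psi> r - r^2 * (deriv ^^ 3) \<psi> r)) \<and>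
     ereal (\<rho>^2) \<le> (INF r\<in>{r. r > 0 \<and> (deriv ^^ 2) \<psi>12 r - r * (deriv ^^ 3) \<psi>12 r \<noteq> 0}.
        ereal (((deriv ^^ 2) \<psi>11 r - r * (deriv ^^ 3) \<psi>11 r) *
               ((deriv ^^ 2) \<psi>22 r - r * (deriv ^^ 3) \<psi>22 r) /
               ((deriv ^^ 2) \<psi>12 r - r * (deriv ^^ 3) \<psi>12 r)^2))
    \<longrightarrow> matrix_pd_in TYPE(real^3) (cov_matrix \<sigma>1 \<sigma>2 \<rho> \<psi>11 \<psi>12 \<psi>22))"
proof ((intro conjI impI; elim conjE), goal_cases)
  case 1
  from 1(2-6) show ?case by (rule matrix_pd_in_real_cov_matrix[OF assms(3)])
next
  case 2
  from 2(2-6) show ?case by (rule matrix_pd_in_real3_cov_matrix[OF assms(3)])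
qed

end
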